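(* Let $L$ be a finite-dimensional Lie algebra over a field $F$. Then $L$ is solvable if and only if $\eta(L:M)=\dim(L/M)$ for all maximal subalgebras $M$ of $L$.
   Context: For a nonzero subalgebra $X$ of $L$, the strict core $k(X)$ is the sum of all ideals of $L$ that are proper subalgebras of $X$ (it is $0$ if there are none). For a maximal subalgebra $M$, a subalgebra $C$ is a completion of $M$ if $C\not\subseteq M$ but every proper subalgebra of $C$ that is an ideal of $L$ is contained in $M$; an ideal completion is a completion that is an ideal of $L$. The ideal index $\eta(L:M)$ is $\dim(C/k(C))$ for any ideal completion $C$ of $M$ (independent of the choice of $C$). *)

theory Defs
  imports Main "HOL.Vector_Spaces"
begin

text \<open>A Lie algebra over a field 'f, with underlying vector space the whole type 'v,
  scalar multiplication s and Lie bracket b.\<close>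

definition lie_algebra :: "('f::field \<Rightarrow> 'v::ab_group_add \<Rightarrow> 'v) \<Rightarrow> ('v \<Rightarrow> 'v \<Rightarrow> 'v) \<Rightarrow> bool" where
  "lie_algebra s b \<longleftrightarrow> vector_space s
     \<and> (\<forall>x y z. b (x + y) z = b x z + b y z)
     \<and> (\<forall>x y z. b x (y + z) = b x y + b x z)
     \<and> (\<forall>a x y. b (s a x) y = s a (b x y))
     \<and> (\<forall>a x y. b x (s a y) = s a (b x y))
     \<and> (\<forall>x. b x x = 0)
     \<and> (\<forall>x y z. b x (b y z) + b y (b z x) + b z (b x y) = 0)"

definition lie_finite_dim :: "('f::field \<Rightarrow> 'v::ab_group_add \<Rightarrow> 'v) \<Rightarrow> bool" where
  "lie_finite_dim s \<longleftrightarrow> (\<exists>B. finite B \<and> module.span s B = UNIV)"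

definition lie_subalgebra :: "('f::field \<Rightarrow> 'v::ab_group_add \<Rightarrow> 'v) \<Rightarrow> ('v \<Rightarrow> 'v \<Rightarrow> 'v) \<Rightarrow> 'v set \<Rightarrow> bool" where
  "lie_subalgebra s b S \<longleftrightarrow> module.subspace s S \<and> (\<forall>x\<in>S. \<forall>y\<in>S. b x y \<in> S)"

definition lie_ideal :: "('f::field \<Rightarrow> 'v::ab_group_add \<Rightarrow> 'v) \<Rightarrow> ('v \<Rightarrow> 'v \<Rightarrow> 'v) \<Rightarrow> 'v set \<Rightarrow> bool" where
  "lie_ideal s b I \<longleftrightarrow> module.subspace s I \<and> (\<forall>x. \<forall>y\<in>I. b x y \<in> I)"

definition maximal_subalgebra :: "('f::field \<Rightarrow> 'v::ab_group_add \<Rightarrow> 'v) \<Rightarrow> ('v \<Rightarrow> 'v \<Rightarrow> 'v) \<Rightarrow> 'v set \<Rightarrow> bool" where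
  "maximal_subalgebra s b M \<longleftrightarrow> lie_subalgebra s b M \<and> M \<noteq> UNIV
     \<and> (\<forall>N. lie_subalgebra s b N \<and> M \<subseteq> N \<longrightarrow> N = M \<or> N = UNIV)"

fun derived_series :: "('f::field \<Rightarrow> 'v::ab_group_add \<Rightarrow> 'v) \<Rightarrow> ('v \<Rightarrow> 'v \<Rightarrow> 'v) \<Rightarrow> nat \<Rightarrow> 'v set" where
  "derived_series s b 0 = UNIV"
| "derived_series s b (Suc k) =
     module.span s {b x y | x y. x \<in> derived_series s b k \<and> y \<in> derived_series s b k}"

definition lie_solvable :: "('f::field \<Rightarrow> 'v::ab_group_add \<Rightarrow> 'v) \<Rightarrow> ('v \<Rightarrow> 'v \<Rightarrow> 'v) \<Rightarrow> bool" where
  "lie_solvable s b \<longleftrightarrow> (\<exists>k. derived_series s b k = {0})"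

definition strict_core :: "('f::field \<Rightarrow> 'v::ab_group_add \<Rightarrow> 'v) \<Rightarrow> ('v \<Rightarrow> 'v \<Rightarrow> 'v) \<Rightarrow> 'v set \<Rightarrow> 'v set" where
  "strict_core s b X = module.span s (\<Union>{I. lie_ideal s b I \<and> I \<subset> X})"

definition lie_completion :: "('f::field \<Rightarrow> 'v::ab_group_add \<Rightarrow> 'v) \<Rightarrow> ('v \<Rightarrow> 'v \<Rightarrow> 'v) \<Rightarrow> 'v set \<Rightarrow> 'v set \<Rightarrow> bool" where
  "lie_completion s b M C \<longleftrightarrow> lie_subalgebra s b C \<and> \<not> C \<subseteq> M
     \<and> (\<forall>I. lie_subalgebra s b I \<and> I \<subset> C \<and> lie_ideal s b I \<longrightarrow> I \<subseteq> M)"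

definition ideal_completion :: "('f::field \<Rightarrow> 'v::ab_group_add \<Rightarrow> 'v) \<Rightarrow> ('v \<Rightarrow> 'v \<Rightarrow> 'v) \<Rightarrow> 'v set \<Rightarrow> 'v set \<Rightarrow> bool" where
  "ideal_completion s b M C \<longleftrightarrow> lie_completion s b M C \<and> lie_ideal s b C"

text \<open>Ideal index eta(L:M) = dim(C / k(C)) = dim C - dim k(C) for an ideal completion C
  (independent of the choice of C).\<close>
definition ideal_index :: "('f::field \<Rightarrow> 'v::ab_group_add \<Rightarrow> 'v) \<Rightarrow> ('v \<Rightarrow> 'v \<Rightarrow> 'v) \<Rightarrow> 'v set \<Rightarrow> nat" where
  "ideal_index s b M = (let C = (SOME C. ideal_completion s b M C) in
      vector_space.dim s C - vector_space.dim s (strict_core s b C))"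

end

theory Submission
  imports Defs "HOL-Library.Set_Algebras"
begin

text \<open>Let \<open>C\<close> be an ideal completion of the maximal subalgebra \<open>M\<close>. Since \<open>M + C = L\<close>, we have
  \<open>dim L - dim M = dim C - dim (M \<inter> C)\<close>, and \<open>k(C) \<subseteq> M \<inter> C\<close>; so \<open>\<eta>(L:M) = dim (L/M)\<close> exactly when
  \<open>k(C) = M \<inter> C\<close>, i.e. when \<open>M \<inter> C\<close> is an ideal. If \<open>L\<close> is solvable, \<open>[C,C]\<close> is a proper ideal of \<open>C\<close>,
  hence lies in \<open>k(C) \<subseteq> M\<close>, and this forces \<open>M \<inter> C\<close> to be an ideal.

  Conversely, suppose all the \<open>M \<inter> C\<close> are ideals but \<open>L\<close> is not solvable. The derived series
  stabilises at a nonzero perfect ideal \<open>D\<close>; choose a chief factor \<open>D/K\<close>. For \<open>x \<in> D\<close>, Fitting's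
  decomposition \<open>L = L\<^sub>0(ad x) + D\<close> (null component taken modulo \<open>K\<close>) shows that a maximal subalgebra
  containing \<open>L\<^sub>0(ad x)\<close> would meet \<open>D\<close> inside \<open>K\<close>, which is impossible unless \<open>x \<in> K\<close>; so every
  \<open>x \<in> D\<close> acts nilpotently on \<open>L/K\<close>. Engel's theorem then yields an element of \<open>D/K\<close> centralised
  by \<open>D\<close>, so by minimality \<open>D/K\<close> is abelian, contradicting \<open>[D,D] = D\<close>.\<close>

lemma set_plus_eq_sums: "A + B = {x + y | x y. x \<in> A \<and> y \<in> B}"
  by (auto simp: set_plus_def)

locale lie_alg =
  fixes s :: "'f::field \<Rightarrow> 'v::ab_group_add \<Rightarrow> 'v" and b :: "'v \<Rightarrow> 'v \<Rightarrow> 'v"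
  assumes lie_algebra: "lie_algebra s b"
begin

sublocale vector_space s
  using lie_algebra by (simp add: lie_algebra_def)

abbreviation ideal :: "'v set \<Rightarrow> bool" where "ideal \<equiv> lie_ideal s b"
abbreviation subalgebra :: "'v set \<Rightarrow> bool" where "subalgebra \<equiv> lie_subalgebra s b"

subsection \<open>Brackets, ideals and subalgebras\<close>

lemma bracket_add_left: "b (x + y) z = b x z + b y z"
  using lie_algebra by (simp add: lie_algebra_def)

lemma bracket_add_right: "b x (y + z) = b x y + b x z"
  using lie_algebra by (simp add: lie_algebra_def)

lemma bracket_scale_left: "b (s a x) y = s a (b x y)"
  using lie_algebra by (simp add: lie_algebra_def)

lemma bracket_scale_right: "b x (s a y) = s a (b x y)"
  using lie_algebra by (simp add: lie_algebra_def)

lemma bracket_self [simp]: "b x x = 0"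
  using lie_algebra by (simp add: lie_algebra_def)

lemma bracket_jacobi: "b x (b y z) + b y (b z x) + b z (b x y) = 0"
  using lie_algebra by (simp add: lie_algebra_def)

lemma bracket_zero_right [simp]: "b x 0 = 0"
  using bracket_add_right[of x 0 0] by simp

lemma bracket_minus_right: "b x (- y) = - b x y"
  using bracket_add_right[of x y "- y"] minus_unique[of "b x y" "b x (- y)"] by simp

lemma bracket_diff_right: "b x (y - z) = b x y - b x z"
  using bracket_add_right[of x y "- z"] by (simp add: bracket_minus_right)

lemma bracket_antisym: "b y x = - b x y"
proof -
  have "b (x + y) (x + y) = b x x + b y x + (b x y + b y y)"
    by (simp only: bracket_add_left bracket_add_right)
  then have "b x y + b y x = 0"
    by (simp add: add.commute)
  then show ?thesis
    using minus_unique[of "b x y" "b y x"] by simp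
qed

lemma bracket_derivation: "b x (b y z) = b (b x y) z + b y (b x z)"
proof -
  have "b x (b y z) = - b y (b z x) - b z (b x y)"
    using bracket_jacobi[of x y z] by (simp add: eq_neg_iff_add_eq_0 algebra_simps)
  also have "\<dots> = b (b x y) z + b y (b x z)"
    using bracket_antisym[of z x] bracket_antisym[of z "b x y"] by (simp add: bracket_minus_right)
  finally show ?thesis .
qed

lemma bracket_right_span:
  assumes "y \<in> span A" "subspace T" "\<And>z. z \<in> A \<Longrightarrow> b x z \<in> T"
  shows "b x y \<in> T"
proof -
  have "subspace {y. b x y \<in> T}"
    using assms(2) by (auto simp: subspace_def bracket_add_right bracket_scale_right)
  then show ?thesis
    using span_induct[OF assms(1), of "\<lambda>y. b x y \<in> T"] assms(3) by auto
qed

definition brackets :: "'v set \<Rightarrow> 'v set \<Rightarrow> 'v set" where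
  "brackets A B = {b x y | x y. x \<in> A \<and> y \<in> B}"

definition bracket_span :: "'v set \<Rightarrow> 'v set \<Rightarrow> 'v set" where
  "bracket_span A B = span (brackets A B)"

lemma brackets_subset_iff: "brackets A B \<subseteq> C \<longleftrightarrow> (\<forall>x\<in>A. \<forall>y\<in>B. b x y \<in> C)"
  by (auto simp: brackets_def)

lemma bracketsI: "x \<in> A \<Longrightarrow> y \<in> B \<Longrightarrow> b x y \<in> brackets A B"
  by (auto simp: brackets_def)

lemma bracket_span_mono: "A \<subseteq> A' \<Longrightarrow> B \<subseteq> B' \<Longrightarrow> bracket_span A B \<subseteq> bracket_span A' B'"
  unfolding bracket_span_def brackets_def by (rule span_mono) blast

lemma bracket_span_subset: "subspace C \<Longrightarrow> brackets A B \<subseteq> C \<Longrightarrow> bracket_span A B \<subseteq> C"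
  unfolding bracket_span_def by (rule span_minimal)

lemma ideal_subspace: "ideal I \<Longrightarrow> subspace I"
  by (simp add: lie_ideal_def)

lemma ideal_bracket_right: "ideal I \<Longrightarrow> y \<in> I \<Longrightarrow> b x y \<in> I"
  by (simp add: lie_ideal_def)

lemma ideal_bracket_left: "ideal I \<Longrightarrow> y \<in> I \<Longrightarrow> b y x \<in> I"
  using bracket_antisym[of y x] ideal_bracket_right[of I y x] subspace_neg[OF ideal_subspace]
  by fastforce

lemma idealI: "subspace I \<Longrightarrow> (\<And>x y. y \<in> I \<Longrightarrow> b x y \<in> I) \<Longrightarrow> ideal I"
  by (simp add: lie_ideal_def)

lemma ideal_subalgebra: "ideal I \<Longrightarrow> subalgebra I"
  by (simp add: lie_ideal_def lie_subalgebra_def)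

lemma subalgebra_subspace: "subalgebra S \<Longrightarrow> subspace S"
  by (simp add: lie_subalgebra_def)

lemma subalgebra_bracket: "subalgebra S \<Longrightarrow> x \<in> S \<Longrightarrow> y \<in> S \<Longrightarrow> b x y \<in> S"
  by (simp add: lie_subalgebra_def)

lemma ideal_UNIV: "ideal UNIV"
  by (simp add: lie_ideal_def)

lemma ideal_zero: "ideal {0}"
  by (simp add: lie_ideal_def)

lemma ideal_Int: "ideal I \<Longrightarrow> ideal J \<Longrightarrow> ideal (I \<inter> J)"
  by (auto simp: lie_ideal_def intro: subspace_inter)

lemma subspace_plus: "subspace A \<Longrightarrow> subspace B \<Longrightarrow> subspace (A + B)"
  unfolding set_plus_eq_sums by (rule subspace_sums)

lemma subset_plus_left: "subspace B \<Longrightarrow> A \<subseteq> A + B"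
  using set_plus_intro[of _ A 0 B] by (force dest: subspace_0)

lemma subset_plus_right: "subspace A \<Longrightarrow> B \<subseteq> A + B"
  by (rule set_zero_plus2[OF subspace_0])

lemma plus_subset: "subspace C \<Longrightarrow> A \<subseteq> C \<Longrightarrow> B \<subseteq> C \<Longrightarrow> A + B \<subseteq> C"
  by (auto elim!: set_plus_elim intro: subspace_add)

lemma ideal_plus:
  assumes "ideal I" "ideal J"
  shows "ideal (I + J)"
proof (rule idealI)
  show "subspace (I + J)"
    using assms by (simp add: subspace_plus ideal_subspace)
  fix x y assume "y \<in> I + J"
  then obtain u v where "y = u + v" "u \<in> I" "v \<in> J"
    by (rule set_plus_elim)
  then show "b x y \<in> I + J"
    using assms by (auto simp: bracket_add_right ideal_bracket_right)
qed

lemma subalgebra_plus_ideal: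
  assumes "subalgebra S" "ideal I"
  shows "subalgebra (S + I)"
  unfolding lie_subalgebra_def
proof safe
  show "subspace (S + I)"
    using assms by (simp add: subspace_plus ideal_subspace subalgebra_subspace)
  fix x y assume "x \<in> S + I" "y \<in> S + I"
  then obtain x1 x2 y1 y2 where xy: "x = x1 + x2" "y = y1 + y2" "x1 \<in> S" "y1 \<in> S" "x2 \<in> I" "y2 \<in> I"
    by (auto elim!: set_plus_elim)
  have "b x y = b x1 y1 + (b x1 y2 + b x2 y)"
    unfolding xy(1,2) by (simp add: bracket_add_left bracket_add_right algebra_simps)
  moreover have "b x1 y2 + b x2 y \<in> I"
    using assms xy by (simp add: subspace_add ideal_subspace ideal_bracket_right ideal_bracket_left)
  ultimately show "b x y \<in> S + I"
    using assms xy by (auto simp: subalgebra_bracket)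
qed

lemma ideal_span_Union:
  assumes "\<And>I. I \<in> F \<Longrightarrow> ideal I"
  shows "ideal (span (\<Union>F))"
proof (rule idealI)
  fix x y assume "y \<in> span (\<Union>F)"
  then show "b x y \<in> span (\<Union>F)"
  proof (rule bracket_right_span)
    fix z assume "z \<in> \<Union>F"
    then obtain I where "I \<in> F" "z \<in> I"
      by blast
    then show "b x z \<in> span (\<Union>F)"
      using assms ideal_bracket_right by (blast intro: span_base)
  qed simp
qed simp

lemma ideal_bracket_span:
  assumes I: "ideal I" and J: "ideal J"
  shows "ideal (bracket_span I J)"
proof (rule idealI)
  fix x y assume "y \<in> bracket_span I J"
  then show "b x y \<in> bracket_span I J"
    unfolding bracket_span_def
  proof (rule bracket_right_span)
    fix z assume "z \<in> brackets I J"
    then obtain i j where z: "z = b i j" "i \<in> I" "j \<in> J"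
      by (auto simp: brackets_def)
    have "b x z = b (b x i) j + b i (b x j)"
      unfolding z(1) by (rule bracket_derivation)
    moreover have "b (b x i) j \<in> brackets I J" "b i (b x j) \<in> brackets I J"
      using z I J by (auto intro: bracketsI ideal_bracket_right)
    ultimately show "b x z \<in> span (brackets I J)"
      by (simp add: span_add span_base)
  qed simp
qed (simp add: bracket_span_def)

lemma bracket_span_ideal_subset: "ideal I \<Longrightarrow> bracket_span I I \<subseteq> I"
  by (rule bracket_span_subset) (auto simp: brackets_subset_iff ideal_subspace ideal_bracket_right)

lemma ideal_relative_centralizer:
  assumes D: "ideal D" and K: "ideal K"
  shows "ideal {z \<in> D. brackets D {z} \<subseteq> K}"
proof (rule idealI)
  show "subspace {z \<in> D. brackets D {z} \<subseteq> K}"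
    using ideal_subspace[OF D] ideal_subspace[OF K]
    by (auto simp: subspace_def brackets_subset_iff bracket_add_right bracket_scale_right)
  fix w z assume "z \<in> {z \<in> D. brackets D {z} \<subseteq> K}"
  then have z: "z \<in> D" "\<And>x. x \<in> D \<Longrightarrow> b x z \<in> K"
    by (auto simp: brackets_subset_iff)
  have "b x (b w z) \<in> K" if "x \<in> D" for x
  proof -
    have "b x (b w z) = b (b x w) z + b w (b x z)"
      by (rule bracket_derivation)
    then show ?thesis
      using z that D K by (simp add: ideal_bracket_left ideal_bracket_right subspace_add ideal_subspace)
  qed
  then show "b w z \<in> {z \<in> D. brackets D {z} \<subseteq> K}"
    using z(1) D by (simp add: brackets_subset_iff ideal_bracket_right)
qed

subsection \<open>Solvability and the strict core\<close>

lemma derived_series_Suc_bracket_span: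
  "derived_series s b (Suc k) = bracket_span (derived_series s b k) (derived_series s b k)"
  by (simp add: bracket_span_def brackets_def)

lemma ideal_derived_series: "ideal (derived_series s b k)"
proof (induction k)
  case (Suc k)
  show ?case
    unfolding derived_series_Suc_bracket_span by (rule ideal_bracket_span[OF Suc Suc])
qed (simp add: ideal_UNIV)

lemma derived_series_Suc_subset: "derived_series s b (Suc k) \<subseteq> derived_series s b k"
  unfolding derived_series_Suc_bracket_span by (rule bracket_span_ideal_subset[OF ideal_derived_series])

lemma perfect_subset_derived_series:
  assumes "bracket_span D D = D"
  shows "D \<subseteq> derived_series s b k"
proof (induction k)
  case (Suc k)
  have "bracket_span D D \<subseteq> derived_series s b (Suc k)"
    unfolding derived_series_Suc_bracket_span by (rule bracket_span_mono[OF Suc Suc])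
  then show ?case
    unfolding assms .
qed simp

lemma solvable_perfect_trivial:
  assumes "lie_solvable s b" "subspace D" "bracket_span D D = D"
  shows "D = {0}"
proof -
  obtain k where "derived_series s b k = {0}"
    using assms(1) unfolding lie_solvable_def by blast
  then show ?thesis
    using perfect_subset_derived_series[OF assms(3), of k] subspace_0[OF assms(2)] by blast
qed

lemma ideal_strict_core: "ideal (strict_core s b X)"
  unfolding strict_core_def by (rule ideal_span_Union) simp

lemma ideal_psubset_strict_core: "ideal I \<Longrightarrow> I \<subset> X \<Longrightarrow> I \<subseteq> strict_core s b X"
  unfolding strict_core_def by (blast intro: span_base)

subsection \<open>Ad-nilpotent actions\<close>

definition nilpotent_mod :: "'v set \<Rightarrow> 'v set \<Rightarrow> 'v set \<Rightarrow> bool" where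
  "nilpotent_mod S U W \<longleftrightarrow> (\<forall>x\<in>S. \<forall>u\<in>U. \<exists>n. (b x ^^ n) u \<in> W)"

lemma nilpotent_mod_mono:
  "nilpotent_mod S U W \<Longrightarrow> S' \<subseteq> S \<Longrightarrow> U' \<subseteq> U \<Longrightarrow> W \<subseteq> W' \<Longrightarrow> nilpotent_mod S' U' W'"
  unfolding nilpotent_mod_def by blast

lemma subalgebra_plus_normalized_span:
  assumes T: "subalgebra T" and y: "brackets T {y} \<subseteq> T"
  shows "subalgebra (T + span {y})"
  unfolding lie_subalgebra_def
proof safe
  have Ts: "subspace T"
    using T by (rule subalgebra_subspace)
  then show "subspace (T + span {y})"
    by (simp add: subspace_plus subspace_span)
  fix u v assume "u \<in> T + span {y}" "v \<in> T + span {y}"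
  then obtain t1 t2 c1 c2 where uv: "u = t1 + s c1 y" "v = t2 + s c2 y" "t1 \<in> T" "t2 \<in> T"
    by (auto elim!: set_plus_elim simp: span_singleton)
  have "b u v = b t1 t2 + s c2 (b t1 y) + - s c1 (b t2 y)"
    unfolding uv(1,2)
    by (simp add: bracket_add_left bracket_add_right bracket_scale_left bracket_scale_right
        bracket_antisym[of y t2] algebra_simps scale_minus_right)
  also have "\<dots> \<in> T"
    using uv(3,4) y T Ts
    by (intro subspace_add subspace_neg subspace_scale) (auto simp: brackets_subset_iff subalgebra_bracket)
  finally show "b u v \<in> T + span {y}"
    using subset_plus_left[OF subspace_span] by blast
qed

lemma subalgebra_eq_plus_normalizing_span:
  assumes S: "subalgebra S" and T: "subalgebra T" "T \<subseteq> S"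
    and y: "y \<in> S - T" "brackets T {y} \<subseteq> T"
    and T_max: "\<And>Y. subalgebra Y \<Longrightarrow> T \<subseteq> Y \<Longrightarrow> Y \<subset> S \<Longrightarrow> Y = T"
  shows "S = T + span {y}"
proof -
  have "T \<subseteq> T + span {y}"
    using subset_plus_left[OF subspace_span] .
  moreover have "y \<in> T + span {y}"
    using subset_plus_right[OF subalgebra_subspace[OF T(1)]] span_base[of y "{y}"] by blast
  moreover have "T + span {y} \<subseteq> S"
    using T y(1) S by (intro plus_subset subalgebra_subspace span_minimal) auto
  moreover have "subalgebra (T + span {y})"
    using T(1) y(2) by (rule subalgebra_plus_normalized_span)
  ultimately show ?thesis
    using T_max y(1) by blast
qed

lemma annihilated_vector_extend:
  assumes W: "subspace W"
    and y: "brackets {y} U \<subseteq> U" "brackets {y} W \<subseteq> W" "nilpotent_mod {y} U W"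
    and Ty: "brackets T {y} \<subseteq> T"
    and u0: "u0 \<in> U - W" "brackets T {u0} \<subseteq> W"
  shows "\<exists>u\<in>U - W. brackets (T + span {y}) {u} \<subseteq> W"
proof -
  define V where "V = {u \<in> U. brackets T {u} \<subseteq> W}"
  have V_stable: "b y u \<in> V" if "u \<in> V" for u
  proof -
    have u: "u \<in> U" "\<And>x. x \<in> T \<Longrightarrow> b x u \<in> W"
      using that by (auto simp: V_def brackets_subset_iff)
    have "b x (b y u) \<in> W" if "x \<in> T" for x
    proof -
      have "b x (b y u) = b (b x y) u + b y (b x u)"
        by (rule bracket_derivation)
      then show ?thesis
        using u that y(2) Ty W by (simp add: brackets_subset_iff subspace_add)
    qed
    then show ?thesis
      using u y(1) by (simp add: V_def brackets_subset_iff)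
  qed
  have orbit: "(b y ^^ n) u0 \<in> V" for n
    by (induction n) (use u0 V_stable in \<open>auto simp: V_def\<close>)
  obtain n where "(b y ^^ n) u0 \<in> W"
    using y(3) u0(1) unfolding nilpotent_mod_def by blast
  then obtain k where k: "(b y ^^ k) u0 \<notin> W" "(b y ^^ Suc k) u0 \<in> W"
    using ex_least_nat_less[of "\<lambda>n. (b y ^^ n) u0 \<in> W"] u0(1) by auto
  define u where "u = (b y ^^ k) u0"
  have u: "u \<in> U" "u \<notin> W" "\<And>x. x \<in> T \<Longrightarrow> b x u \<in> W" "b y u \<in> W"
    using orbit[of k] k by (auto simp: u_def V_def brackets_subset_iff)
  have "b x u \<in> W" if "x \<in> T + span {y}" for x
  proof -
    obtain t c where "x = t + s c y" "t \<in> T"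
      using \<open>x \<in> T + span {y}\<close> by (auto elim!: set_plus_elim simp: span_singleton)
    then show ?thesis
      using u W by (simp add: bracket_add_left bracket_scale_left subspace_add subspace_scale)
  qed
  then show ?thesis
    using u by (auto simp: brackets_subset_iff)
qed

lemma ad_power_add: "(b x ^^ n) (u + v) = (b x ^^ n) u + (b x ^^ n) v"
  by (induction n) (simp_all add: bracket_add_right)

lemma ad_power_scale: "(b x ^^ n) (s c u) = s c ((b x ^^ n) u)"
  by (induction n) (simp_all add: bracket_scale_right)

lemma ad_power_diff: "(b x ^^ n) (u - v) = (b x ^^ n) u - (b x ^^ n) v"
  by (induction n) (simp_all add: bracket_diff_right)

lemma ad_power_zero [simp]: "(b x ^^ n) 0 = 0"
  by (induction n) simp_all

lemma ad_power_ideal: "ideal I \<Longrightarrow> u \<in> I \<Longrightarrow> (b x ^^ n) u \<in> I"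
  by (induction n) (simp_all add: ideal_bracket_right)

lemma ad_power_ideal_mono:
  assumes "ideal I" "(b x ^^ n) u \<in> I" "n \<le> m"
  shows "(b x ^^ m) u \<in> I"
proof -
  have "(b x ^^ m) u = (b x ^^ (m - n)) ((b x ^^ n) u)"
    using assms(3) by (metis comp_apply funpow_add le_add_diff_inverse2)
  then show ?thesis
    using ad_power_ideal[OF assms(1,2)] by simp
qed

lemma ad_power_bracket:
  "(b x ^^ n) (b y z) \<in> span {b ((b x ^^ i) y) ((b x ^^ j) z) | i j. i + j = n}"
proof (induction n)
  case 0
  show ?case
    by (rule span_base) force
next
  case (Suc n)
  let ?G = "\<lambda>n. {b ((b x ^^ i) y) ((b x ^^ j) z) | i j. i + j = n}"
  have "b x ((b x ^^ n) (b y z)) \<in> span (?G (Suc n))"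
    using Suc.IH
  proof (rule bracket_right_span)
    fix g assume "g \<in> ?G n"
    then obtain i j where g: "g = b ((b x ^^ i) y) ((b x ^^ j) z)" "i + j = n"
      by blast
    have "b x g = b ((b x ^^ Suc i) y) ((b x ^^ j) z) + b ((b x ^^ i) y) ((b x ^^ Suc j) z)"
      unfolding g(1) funpow.simps(2) comp_apply by (rule bracket_derivation)
    moreover have "b ((b x ^^ Suc i) y) ((b x ^^ j) z) \<in> ?G (Suc n)"
      by (intro CollectI exI[of _ "Suc i"] exI[of _ j]) (simp add: g(2))
    moreover have "b ((b x ^^ i) y) ((b x ^^ Suc j) z) \<in> ?G (Suc n)"
      by (intro CollectI exI[of _ i] exI[of _ "Suc j"]) (simp add: g(2))
    ultimately show "b x g \<in> span (?G (Suc n))"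
      by (simp add: span_add span_base)
  qed simp
  then show ?case
    by simp
qed

definition fitting_null :: "'v set \<Rightarrow> 'v \<Rightarrow> 'v set" where
  "fitting_null K x = {y. \<exists>n. (b x ^^ n) y \<in> K}"

lemma subalgebra_fitting_null:
  assumes K: "ideal K"
  shows "subalgebra (fitting_null K x)"
  unfolding lie_subalgebra_def
proof (intro conjI ballI)
  have Ks: "subspace K"
    using K by (rule ideal_subspace)
  show "subspace (fitting_null K x)"
  proof (rule subspaceI)
    show "0 \<in> fitting_null K x"
      using subspace_0[OF Ks] by (auto simp: fitting_null_def)
  next
    fix u v assume "u \<in> fitting_null K x" "v \<in> fitting_null K x"
    then obtain m n where "(b x ^^ m) u \<in> K" "(b x ^^ n) v \<in> K"
      by (auto simp: fitting_null_def)
    then have "(b x ^^ (m + n)) u \<in> K" "(b x ^^ (m + n)) v \<in> K"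
      using ad_power_ideal_mono[OF K] by auto
    then show "u + v \<in> fitting_null K x"
      unfolding fitting_null_def by (auto simp: ad_power_add intro: subspace_add[OF Ks])
  next
    fix c u assume "u \<in> fitting_null K x"
    then show "s c u \<in> fitting_null K x"
      by (auto simp: fitting_null_def ad_power_scale intro: subspace_scale[OF Ks])
  qed
  fix u v assume "u \<in> fitting_null K x" "v \<in> fitting_null K x"
  then obtain m n where mn: "(b x ^^ m) u \<in> K" "(b x ^^ n) v \<in> K"
    by (auto simp: fitting_null_def)
  have "{b ((b x ^^ i) u) ((b x ^^ j) v) | i j. i + j = m + n} \<subseteq> K"
  proof clarify
    fix i j :: nat assume "i + j = m + n"
    then have "m \<le> i \<or> n \<le> j"
      by linarith
    then show "b ((b x ^^ i) u) ((b x ^^ j) v) \<in> K"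
      using ad_power_ideal_mono[OF K mn(1), of i] ad_power_ideal_mono[OF K mn(2), of j]
        ideal_bracket_left[OF K] ideal_bracket_right[OF K] by blast
  qed
  then have "(b x ^^ (m + n)) (b u v) \<in> K"
    using ad_power_bracket span_minimal[OF _ Ks] by blast
  then show "b u v \<in> fitting_null K x"
    unfolding fitting_null_def by blast
qed

lemma ideal_subset_fitting_null: "K \<subseteq> fitting_null K x"
  unfolding fitting_null_def by (auto intro: exI[of _ 0])

lemma mem_fitting_null_self: "ideal K \<Longrightarrow> x \<in> fitting_null K x"
  unfolding fitting_null_def by (auto intro!: exI[of _ 1] subspace_0 ideal_subspace)

lemma subspace_range_ad_power: "subspace (range (b x ^^ n))"
proof (rule subspaceI)
  show "0 \<in> range (b x ^^ n)"
    using ad_power_zero by (metis rangeI)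
qed (auto simp flip: ad_power_add ad_power_scale)

end

subsection \<open>Finite dimension\<close>

locale finite_dimensional_lie_alg = lie_alg s b
  for s :: "'f::field \<Rightarrow> 'v::ab_group_add \<Rightarrow> 'v" and b +
  assumes finite_dim: "lie_finite_dim s"
begin

definition fd_basis :: "'v set" where
  "fd_basis = (SOME B :: 'v set. finite B \<and> independent B \<and> span B = UNIV)"

lemma fd_basis: "finite fd_basis" "independent fd_basis" "span fd_basis = UNIV"
proof -
  obtain A where A: "finite A" "span A = UNIV"
    using finite_dim unfolding lie_finite_dim_def by blast
  obtain B where B: "B \<subseteq> A" "independent B" "A \<subseteq> span B"
    by (rule maximal_independent_subset)
  have "finite B"
    using B(1) A(1) by (rule finite_subset)
  moreover have "span B = UNIV"
    using span_minimal[OF B(3) subspace_span] A(2) by blast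
  ultimately have "\<exists>B. finite B \<and> independent B \<and> span B = UNIV"
    using B(2) by blast
  from someI_ex[OF this] show "finite fd_basis" "independent fd_basis" "span fd_basis = UNIV"
    unfolding fd_basis_def by blast+
qed

sublocale finite_dimensional_vector_space s fd_basis
  by unfold_locales (fact fd_basis)+

lemma dim_strict_mono:
  assumes "subspace A" "subspace B" "A \<subset> B"
  shows "dim A < dim B"
proof (rule dim_psubset)
  have "span A = A" "span B = B"
    using assms(1,2) by (simp_all only: span_eq_iff)
  then show "span A \<subset> span B"
    using assms(3) by (simp only:)
qed

lemma subspace_maximal_exists:
  assumes "P X" and sub: "\<And>Y. P Y \<Longrightarrow> subspace Y"
  obtains Z where "P Z" "X \<subseteq> Z" "\<And>Y. P Y \<Longrightarrow> Z \<subseteq> Y \<Longrightarrow> Y = Z"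
  using assms(1)
proof (induction "dimension - dim X" arbitrary: X rule: less_induct)
  case less
  show ?case
  proof (cases "\<exists>Y. P Y \<and> X \<subset> Y")
    case True
    then obtain Y where Y: "P Y" "X \<subset> Y"
      by blast
    have "dim X < dim Y"
      using sub[OF less.prems(2)] sub[OF Y(1)] Y(2) by (rule dim_strict_mono)
    then have "dimension - dim Y < dimension - dim X"
      using dim_subset_UNIV[of Y] by linarith
    then show ?thesis
      using less.hyps[OF _ _ Y(1)] less.prems(1) Y(2) by blast
  next
    case False
    then show ?thesis
      using less.prems by blast
  qed
qed

lemma subspace_minimal_exists:
  assumes "P X" and sub: "\<And>Y. P Y \<Longrightarrow> subspace Y"
  obtains Z where "P Z" "Z \<subseteq> X" "\<And>Y. P Y \<Longrightarrow> Y \<subseteq> Z \<Longrightarrow> Y = Z"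
  using assms(1)
proof (induction "dim X" arbitrary: X rule: less_induct)
  case less
  show ?case
  proof (cases "\<exists>Y. P Y \<and> Y \<subset> X")
    case True
    then obtain Y where Y: "P Y" "Y \<subset> X"
      by blast
    have "dim Y < dim X"
      using sub[OF Y(1)] sub[OF less.prems(2)] Y(2) by (rule dim_strict_mono)
    then show ?thesis
      using less.hyps[OF _ _ Y(1)] less.prems(1) Y(2) by blast
  next
    case False
    then show ?thesis
      using less.prems by blast
  qed
qed

lemma decreasing_subspaces_stabilize:
  assumes sub: "\<And>n. subspace (A n)" and dec: "\<And>n. A (Suc n) \<subseteq> A n"
  obtains N where "\<And>m. N \<le> m \<Longrightarrow> A m = A N"
proof -
  obtain N where N: "\<And>m. dim (A N) \<le> dim (A m)"
    using ex_has_least_nat[of "\<lambda>_. True" 0 "\<lambda>n. dim (A n)"] by blast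
  have "A m = A N" if "N \<le> m" for m
    using sub sub lift_Suc_antimono_le[of A, OF dec that] N by (rule subspace_dim_equal)
  then show ?thesis
    using that by blast
qed

lemma exists_maximal_subalgebra:
  assumes "subalgebra S" "S \<noteq> UNIV"
  obtains M where "maximal_subalgebra s b M" "S \<subseteq> M"
proof -
  obtain M where M: "subalgebra M \<and> M \<noteq> UNIV" "S \<subseteq> M"
    and M_max: "\<And>Y. subalgebra Y \<and> Y \<noteq> UNIV \<Longrightarrow> M \<subseteq> Y \<Longrightarrow> Y = M"
  proof (rule subspace_maximal_exists[of "\<lambda>Y. subalgebra Y \<and> Y \<noteq> UNIV" S])
    show "subalgebra S \<and> S \<noteq> UNIV"
      using assms by blast
  qed (auto simp: subalgebra_subspace intro: that)
  then have "maximal_subalgebra s b M"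
    unfolding maximal_subalgebra_def by blast
  then show ?thesis
    using M(2) that by blast
qed

lemma exists_ideal_completion:
  assumes "M \<noteq> UNIV"
  obtains C where "ideal_completion s b M C"
proof -
  obtain C where C: "ideal C \<and> \<not> C \<subseteq> M"
    and C_min: "\<And>Y. ideal Y \<and> \<not> Y \<subseteq> M \<Longrightarrow> Y \<subseteq> C \<Longrightarrow> Y = C"
  proof (rule subspace_minimal_exists[of "\<lambda>Y. ideal Y \<and> \<not> Y \<subseteq> M" UNIV])
    show "ideal UNIV \<and> \<not> UNIV \<subseteq> M"
      using assms ideal_UNIV by blast
  qed (auto simp: ideal_subspace intro: that)
  have "ideal_completion s b M C"
    using C C_min by (auto simp: ideal_completion_def lie_completion_def ideal_subalgebra)
  then show ?thesis
    by (rule that)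
qed

lemma not_solvable_perfect_ideal:
  assumes "\<not> lie_solvable s b"
  obtains D where "ideal D" "D \<noteq> {0}" "bracket_span D D = D"
proof -
  obtain N where N: "\<And>m. N \<le> m \<Longrightarrow> derived_series s b m = derived_series s b N"
    using decreasing_subspaces_stabilize[of "derived_series s b"]
      ideal_subspace[OF ideal_derived_series] derived_series_Suc_subset by blast
  have "bracket_span (derived_series s b N) (derived_series s b N) = derived_series s b N"
    using N[of "Suc N"] by (simp only: derived_series_Suc_bracket_span le_Suc_eq order_refl simp_thms)
  moreover have "derived_series s b N \<noteq> {0}"
    using assms unfolding lie_solvable_def by blast
  ultimately show ?thesis
    using that ideal_derived_series by blast
qed

lemma fitting_decomposition:
  assumes K: "ideal K" and D: "ideal D" and x: "x \<in> D"
  shows "fitting_null K x + D = UNIV"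
proof -
  define R where "R n = range (b x ^^ n) + K" for n
  have "R (Suc n) \<subseteq> R n" for n
    unfolding R_def funpow_Suc_right by (intro set_plus_mono2) auto
  then obtain N where N: "\<And>m. N \<le> m \<Longrightarrow> R m = R N"
    using decreasing_subspaces_stabilize[of R] subspace_plus[OF subspace_range_ad_power ideal_subspace[OF K]]
    unfolding R_def by blast
  let ?N = "Suc N"
  have "y \<in> fitting_null K x + D" for y
  proof -
    have "(b x ^^ ?N) y \<in> R ?N"
      unfolding R_def using subset_plus_left[OF ideal_subspace[OF K]] by blast
    also have "R ?N = R (?N + ?N)"
      using N[of ?N] N[of "?N + ?N"] by simp
    finally obtain w k where wk: "(b x ^^ ?N) y = (b x ^^ (?N + ?N)) w + k" "k \<in> K"
      unfolding R_def by (auto elim!: set_plus_elim)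
    have "(b x ^^ ?N) (y - (b x ^^ ?N) w) = (b x ^^ ?N) y - (b x ^^ (?N + ?N)) w"
      by (simp only: ad_power_diff funpow_add comp_apply)
    also have "\<dots> = k"
      unfolding wk(1) by (rule add_diff_cancel_left')
    finally have "(b x ^^ ?N) (y - (b x ^^ ?N) w) = k" .
    then have "y - (b x ^^ ?N) w \<in> fitting_null K x"
      unfolding fitting_null_def using wk(2) by blast
    moreover have "(b x ^^ ?N) w \<in> D"
      using ideal_bracket_left[OF D x] by simp
    ultimately show ?thesis
      using set_plus_intro by fastforce
  qed
  then show ?thesis
    by blast
qed

text \<open>Engel's theorem for \<open>S/K\<close> acting on \<open>U/W\<close>. The ideal \<open>K\<close> is carried along because \<open>S\<close> is only
  assumed ad-nilpotent modulo \<open>K\<close>.\<close>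

lemma engel_annihilated_vector:
  assumes K: "ideal K"
    and "subalgebra S" "K \<subseteq> S" "nilpotent_mod S S K"
    and "subspace U" "subspace W" "W \<subset> U"
    and "brackets S U \<subseteq> U" "brackets S W \<subseteq> W" "brackets K U \<subseteq> W" "nilpotent_mod S U W"
  shows "\<exists>u\<in>U - W. brackets S {u} \<subseteq> W"
  using assms(2-)
proof (induction "dim S" arbitrary: S U W rule: less_induct)
  case less
  note S = less.prems(1-3) and UW = less.prems(4-10)
  show ?case
  proof (cases "K = S")
    case True
    obtain u where "u \<in> U - W"
      using UW(3) by blast
    moreover have "brackets S {u} \<subseteq> W"
      using calculation UW(6) True by (auto simp: brackets_subset_iff)
    ultimately show ?thesis
      by blast
  next
    case False
    obtain T where T: "subalgebra T \<and> K \<subseteq> T \<and> T \<subset> S"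
      and T_max: "\<And>Y. subalgebra Y \<and> K \<subseteq> Y \<and> Y \<subset> S \<Longrightarrow> T \<subseteq> Y \<Longrightarrow> Y = T"
    proof (rule subspace_maximal_exists[of "\<lambda>Y. subalgebra Y \<and> K \<subseteq> Y \<and> Y \<subset> S" K])
      show "subalgebra K \<and> K \<subseteq> K \<and> K \<subset> S"
        using K False S(2) by (auto intro: ideal_subalgebra)
    qed (auto simp: subalgebra_subspace intro: that)
    have dim_T: "dim T < dim S"
      using T S(1) by (auto intro: dim_strict_mono subalgebra_subspace)
    have T_S: "brackets T S \<subseteq> S" "brackets T T \<subseteq> T"
      using T S(1) by (auto simp: brackets_subset_iff subalgebra_bracket)
    have K_S: "brackets K S \<subseteq> T"
      using T ideal_bracket_left[OF K] by (auto simp: brackets_subset_iff)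
    have T_nil: "nilpotent_mod T T K" "nilpotent_mod T S T"
      using nilpotent_mod_mono[OF S(3)] T by auto
    \<comment> \<open>\<open>T\<close> acting on \<open>S/T\<close> yields an element normalising \<open>T\<close>, so \<open>T\<close> has codimension one.\<close>
    obtain y where y: "y \<in> S - T" "brackets T {y} \<subseteq> T"
      using less.hyps[OF dim_T, of S T] T T_S K_S T_nil S(1) by (auto intro: subalgebra_subspace)
    have S_eq: "S = T + span {y}"
    proof (rule subalgebra_eq_plus_normalizing_span)
      fix Y assume "subalgebra Y" "T \<subseteq> Y" "Y \<subset> S"
      then show "Y = T"
        using T T_max by blast
    qed (use S(1) T y in auto)
    have "brackets T U \<subseteq> U" "brackets T W \<subseteq> W" "nilpotent_mod T U W"
      using UW(4,5) nilpotent_mod_mono[OF UW(7)] T by (auto simp: brackets_subset_iff)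
    then obtain u0 where "u0 \<in> U - W" "brackets T {u0} \<subseteq> W"
      using less.hyps[OF dim_T, of U W] T T_nil UW by blast
    moreover have "brackets {y} U \<subseteq> U" "brackets {y} W \<subseteq> W" "nilpotent_mod {y} U W"
      using UW(4,5) nilpotent_mod_mono[OF UW(7)] y(1) by (auto simp: brackets_subset_iff)
    ultimately show ?thesis
      using annihilated_vector_extend[OF UW(2) _ _ _ y(2)] S_eq by blast
  qed
qed

end

subsection \<open>Ideal completions of maximal subalgebras\<close>

locale maximal_completion = finite_dimensional_lie_alg s b
  for s :: "'f::field \<Rightarrow> 'v::ab_group_add \<Rightarrow> 'v" and b +
  fixes M C :: "'v set"
  assumes maximal: "maximal_subalgebra s b M" and completion: "ideal_completion s b M C"
begin

lemma subalgebra_M: "subalgebra M"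
  using maximal by (simp add: maximal_subalgebra_def)

lemma subspace_M: "subspace M"
  using subalgebra_M by (rule subalgebra_subspace)

lemma ideal_C: "ideal C"
  using completion by (simp add: ideal_completion_def)

lemma subspace_C: "subspace C"
  using ideal_C by (rule ideal_subspace)

lemma C_not_subset_M: "\<not> C \<subseteq> M"
  using completion by (simp add: ideal_completion_def lie_completion_def)

lemma ideal_psubset_C_subset_M: "ideal I \<Longrightarrow> I \<subset> C \<Longrightarrow> I \<subseteq> M"
  using completion by (auto simp: ideal_completion_def lie_completion_def ideal_subalgebra)

lemma M_plus_C: "M + C = UNIV"
proof -
  have "subalgebra (M + C)"
    using subalgebra_M ideal_C by (rule subalgebra_plus_ideal)
  moreover have "M \<subseteq> M + C" "C \<subseteq> M + C"
    using subset_plus_left[OF subspace_C] subset_plus_right[OF subspace_M] .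
  ultimately show ?thesis
    using maximal C_not_subset_M unfolding maximal_subalgebra_def by blast
qed

lemma strict_core_subset_Int: "strict_core s b C \<subseteq> M \<inter> C"
  unfolding strict_core_def
  by (rule span_minimal) (auto intro: subspace_inter subspace_M subspace_C dest: ideal_psubset_C_subset_M)

lemma ideal_Int_if_brackets_subset:
  assumes I: "ideal I" and CI: "brackets C I \<subseteq> M"
  shows "ideal (M \<inter> I)"
proof (rule idealI)
  show MI: "subspace (M \<inter> I)"
    using subspace_M ideal_subspace[OF I] by (rule subspace_inter)
  fix x y assume y: "y \<in> M \<inter> I"
  obtain m c where x: "x = m + c" "m \<in> M" "c \<in> C"
    using M_plus_C by (blast elim: set_plus_elim)
  have "b m y \<in> M \<inter> I"
    using x y subalgebra_M I by (simp add: subalgebra_bracket ideal_bracket_right)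
  moreover have "b c y \<in> M \<inter> I"
    using x y CI I by (auto simp: brackets_subset_iff ideal_bracket_right)
  ultimately show "b x y \<in> M \<inter> I"
    unfolding x(1) bracket_add_left by (rule subspace_add[OF MI])
qed

lemma strict_core_eq_Int_iff: "strict_core s b C = M \<inter> C \<longleftrightarrow> ideal (M \<inter> C)"
proof
  assume "ideal (M \<inter> C)"
  moreover have "M \<inter> C \<subset> C"
    using C_not_subset_M by blast
  ultimately show "strict_core s b C = M \<inter> C"
    using strict_core_subset_Int ideal_psubset_strict_core by blast
qed (metis ideal_strict_core)

lemma index_eq_codim_iff:
  "dim C - dim (strict_core s b C) = dim UNIV - dim M \<longleftrightarrow> ideal (M \<inter> C)"
proof -
  have "dim UNIV + dim (M \<inter> C) = dim M + dim C"
    using dim_sums_Int[OF subspace_M subspace_C] M_plus_C by (simp add: set_plus_eq_sums)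
  moreover have "dim (strict_core s b C) \<le> dim (M \<inter> C)" "dim (M \<inter> C) \<le> dim C"
    using strict_core_subset_Int by (auto intro: dim_subset)
  ultimately have "dim C - dim (strict_core s b C) = dim UNIV - dim M
      \<longleftrightarrow> dim (M \<inter> C) \<le> dim (strict_core s b C)"
    by linarith
  also have "\<dots> \<longleftrightarrow> strict_core s b C = M \<inter> C"
    using subspace_dim_equal[OF ideal_subspace[OF ideal_strict_core] subspace_inter[OF subspace_M subspace_C]
        strict_core_subset_Int] by auto
  finally show ?thesis
    by (simp only: strict_core_eq_Int_iff)
qed

lemma ideal_Int_if_solvable:
  assumes "lie_solvable s b"
  shows "ideal (M \<inter> C)"
proof (rule ideal_Int_if_brackets_subset[OF ideal_C])
  have "C \<noteq> {0}"
    using C_not_subset_M subspace_0[OF subspace_M] by blast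
  then have "bracket_span C C \<subset> C"
    using solvable_perfect_trivial[OF assms subspace_C] bracket_span_ideal_subset[OF ideal_C] by blast
  then have "bracket_span C C \<subseteq> strict_core s b C"
    using ideal_bracket_span[OF ideal_C ideal_C] by (rule ideal_psubset_strict_core[rotated])
  then show "brackets C C \<subseteq> M"
    using strict_core_subset_Int span_superset unfolding bracket_span_def by blast
qed

end

context finite_dimensional_lie_alg
begin

definition completion_of :: "'v set \<Rightarrow> 'v set" where
  "completion_of M = (SOME C. ideal_completion s b M C)"

lemma maximal_completion_of:
  assumes "maximal_subalgebra s b M"
  shows "maximal_completion s b M (completion_of M)"
proof -
  have "M \<noteq> UNIV"
    using assms by (simp add: maximal_subalgebra_def)
  then obtain C where "ideal_completion s b M C"
    by (rule exists_ideal_completion)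
  then have "ideal_completion s b M (completion_of M)"
    unfolding completion_of_def by (rule someI)
  then show ?thesis
    using assms by unfold_locales (simp_all add: lie_algebra finite_dim)
qed

lemma ideal_index_eq_codim_iff:
  assumes "maximal_subalgebra s b M"
  shows "ideal_index s b M = dim UNIV - dim M \<longleftrightarrow> ideal (M \<inter> completion_of M)"
proof -
  interpret maximal_completion s b M "completion_of M"
    using assms by (rule maximal_completion_of)
  show ?thesis
    using index_eq_codim_iff unfolding ideal_index_def completion_of_def Let_def .
qed

end

subsection \<open>Chief factors\<close>

locale chief_factor = finite_dimensional_lie_alg s b
  for s :: "'f::field \<Rightarrow> 'v::ab_group_add \<Rightarrow> 'v" and b +
  fixes D K :: "'v set"
  assumes ideal_D: "ideal D" and ideal_K: "ideal K" and K_psubset_D: "K \<subset> D"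
    and chief: "\<And>I. ideal I \<Longrightarrow> K \<subseteq> I \<Longrightarrow> I \<subseteq> D \<Longrightarrow> I = K \<or> I = D"
begin

lemma ideal_subset_K:
  assumes I: "ideal I" "I \<subseteq> D" and V: "subspace V" "I \<subseteq> V" "K \<subseteq> V" "\<not> D \<subseteq> V"
  shows "I \<subseteq> K"
proof -
  have "ideal (I + K)"
    using I(1) ideal_K by (rule ideal_plus)
  moreover have "K \<subseteq> I + K"
    using subset_plus_right[OF ideal_subspace[OF I(1)]] .
  moreover have "I + K \<subseteq> D"
    using I(2) K_psubset_D by (intro plus_subset ideal_subspace[OF ideal_D]) auto
  moreover have "I + K \<subseteq> V"
    using V(1-3) by (rule plus_subset)
  ultimately have "I + K = K"
    using chief V(4) by blast
  then show ?thesis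
    using subset_plus_left[OF ideal_subspace[OF ideal_K], of I] by simp
qed

lemma plus_K_eq_D:
  assumes "ideal I" "I \<subseteq> D" "\<not> I \<subseteq> K"
  shows "I + K = D"
proof -
  have "I + K \<subseteq> D"
    using assms(2) K_psubset_D by (intro plus_subset ideal_subspace[OF ideal_D]) auto
  moreover have "I + K \<noteq> K"
    using subset_plus_left[OF ideal_subspace[OF ideal_K], of I] assms(3) by blast
  ultimately show ?thesis
    using chief[OF ideal_plus[OF assms(1) ideal_K] subset_plus_right[OF ideal_subspace[OF assms(1)]]]
    by blast
qed

lemma maximal_Int_D_subset_K:
  assumes "maximal_subalgebra s b M" "ideal_completion s b M C" and MC: "ideal (M \<inter> C)"
    and KM: "K \<subseteq> M" and DM: "\<not> D \<subseteq> M"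
  shows "M \<inter> D \<subseteq> K"
proof -
  interpret maximal_completion s b M C
    using assms(1,2) by unfold_locales (simp_all add: lie_algebra finite_dim)
  show ?thesis
  proof (cases "C \<subseteq> D")
    case True
    have MC_K: "M \<inter> C \<subseteq> K"
      using MC True KM DM subspace_M by (intro ideal_subset_K) auto
    have "C + K = D"
      using ideal_C True C_not_subset_M KM by (intro plus_K_eq_D) auto
    show ?thesis
    proof
      fix y assume y: "y \<in> M \<inter> D"
      then obtain c k where ck: "y = c + k" "c \<in> C" "k \<in> K"
        using \<open>C + K = D\<close> by (blast elim: set_plus_elim)
      have "c = y - k"
        using ck(1) by simp
      then have "c \<in> M"
        using y ck(3) KM subspace_diff[OF subspace_M] by blast
      then show "y \<in> K"
        using ck MC_K subspace_add[OF ideal_subspace[OF ideal_K]] by blast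
    qed
  next
    case False
    have CD_K: "C \<inter> D \<subseteq> K"
    proof (rule ideal_subset_K)
      show "ideal (C \<inter> D)"
        using ideal_C ideal_D by (rule ideal_Int)
      then show "C \<inter> D \<subseteq> M"
        using False by (intro ideal_psubset_C_subset_M) auto
    qed (use KM DM subspace_M in auto)
    have "brackets C D \<subseteq> C \<inter> D"
      using ideal_C ideal_D by (auto simp: brackets_subset_iff ideal_bracket_left ideal_bracket_right)
    then have "brackets C D \<subseteq> M"
      using CD_K KM by blast
    then have "ideal (M \<inter> D)"
      by (rule ideal_Int_if_brackets_subset[OF ideal_D])
    then show ?thesis
      using KM DM subspace_M by (intro ideal_subset_K) auto
  qed
qed

context
  assumes Int_completion_ideal:
    "\<And>M. maximal_subalgebra s b M \<Longrightarrow> \<exists>C. ideal_completion s b M C \<and> ideal (M \<inter> C)"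
begin

lemma nilpotent_mod_D: "nilpotent_mod D UNIV K"
  unfolding nilpotent_mod_def
proof (intro ballI)
  fix x y assume x: "x \<in> D"
  have "fitting_null K x = UNIV"
  proof (rule ccontr)
    assume "fitting_null K x \<noteq> UNIV"
    then obtain M where M: "maximal_subalgebra s b M" "fitting_null K x \<subseteq> M"
      using exists_maximal_subalgebra subalgebra_fitting_null[OF ideal_K] by blast
    obtain C where C: "ideal_completion s b M C" "ideal (M \<inter> C)"
      using Int_completion_ideal[OF M(1)] by blast
    have KM: "K \<subseteq> M"
      using ideal_subset_fitting_null M(2) by blast
    have DM: "\<not> D \<subseteq> M"
    proof
      assume "D \<subseteq> M"
      then have "fitting_null K x + D \<subseteq> M"
        using M subalgebra_subspace by (intro plus_subset) (auto simp: maximal_subalgebra_def)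
      then show False
        using fitting_decomposition[OF ideal_K ideal_D x] M(1) by (auto simp: maximal_subalgebra_def)
    qed
    have "x \<in> K"
      using maximal_Int_D_subset_K[OF M(1) C KM DM] mem_fitting_null_self[OF ideal_K] M(2) x by blast
    then have "fitting_null K x = UNIV"
      using ideal_bracket_left[OF ideal_K] by (auto simp: fitting_null_def intro: exI[of _ 1])
    with \<open>fitting_null K x \<noteq> UNIV\<close> show False ..
  qed
  then show "\<exists>n. (b x ^^ n) y \<in> K"
    by (auto simp: fitting_null_def)
qed

lemma chief_factor_abelian: "bracket_span D D \<subseteq> K"
proof -
  have "brackets D D \<subseteq> D" "brackets D K \<subseteq> K" "brackets K D \<subseteq> K" "nilpotent_mod D D K"
    using ideal_D ideal_K nilpotent_mod_mono[OF nilpotent_mod_D]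
    by (auto simp: brackets_subset_iff ideal_bracket_right ideal_bracket_left)
  then obtain z where z: "z \<in> D - K" "brackets D {z} \<subseteq> K"
    using engel_annihilated_vector[OF ideal_K ideal_subalgebra[OF ideal_D]] K_psubset_D
      ideal_subspace[OF ideal_D] ideal_subspace[OF ideal_K] by blast
  let ?Z = "{z \<in> D. brackets D {z} \<subseteq> K}"
  have "K \<subseteq> ?Z"
    using K_psubset_D ideal_bracket_right[OF ideal_K] by (auto simp: brackets_subset_iff)
  moreover have "?Z \<noteq> K"
    using z by blast
  ultimately have "?Z = D"
    using chief[OF ideal_relative_centralizer[OF ideal_D ideal_K]] by blast
  then have "brackets D D \<subseteq> K"
    by (auto simp: brackets_subset_iff)
  then show ?thesis
    by (rule bracket_span_subset[OF ideal_subspace[OF ideal_K]])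
qed

end

end

context finite_dimensional_lie_alg
begin

lemma solvable_if_Int_completion_ideal:
  assumes "\<And>M. maximal_subalgebra s b M \<Longrightarrow> \<exists>C. ideal_completion s b M C \<and> ideal (M \<inter> C)"
  shows "lie_solvable s b"
proof (rule ccontr)
  assume "\<not> lie_solvable s b"
  then obtain D where D: "ideal D" "D \<noteq> {0}" "bracket_span D D = D"
    by (rule not_solvable_perfect_ideal)
  obtain K where K: "ideal K \<and> K \<subset> D" and K_max: "\<And>I. ideal I \<and> I \<subset> D \<Longrightarrow> K \<subseteq> I \<Longrightarrow> I = K"
  proof (rule subspace_maximal_exists[of "\<lambda>I. ideal I \<and> I \<subset> D" "{0}"])
    show "ideal {0} \<and> {0} \<subset> D"
      using D(1,2) ideal_zero subspace_0[OF ideal_subspace] by blast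
  qed (auto simp: ideal_subspace intro: that)
  interpret chief_factor s b D K
    using D(1) K K_max by unfold_locales (auto simp: lie_algebra finite_dim)
  have "D \<subseteq> K"
    using chief_factor_abelian[OF assms] D(3) by simp
  then show False
    using K by blast
qed

end

theorem corollary2p6:
  fixes s :: "'f::field \<Rightarrow> 'v::ab_group_add \<Rightarrow> 'v" and b :: "'v \<Rightarrow> 'v \<Rightarrow> 'v"
  assumes "lie_algebra s b" and "lie_finite_dim s"
  shows "lie_solvable s b \<longleftrightarrow>
    (\<forall>M. maximal_subalgebra s b M \<longrightarrow>
        ideal_index s b M = vector_space.dim s (UNIV :: 'v set) - vector_space.dim s M)"
proof -
  interpret finite_dimensional_lie_alg s b
    using assms by unfold_locales
  have "lie_solvable s b \<longleftrightarrow>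
      (\<forall>M. maximal_subalgebra s b M \<longrightarrow> ideal (M \<inter> completion_of M))"
  proof
    assume "lie_solvable s b"
    then show "\<forall>M. maximal_subalgebra s b M \<longrightarrow> ideal (M \<inter> completion_of M)"
      using maximal_completion.ideal_Int_if_solvable maximal_completion_of by blast
  next
    assume "\<forall>M. maximal_subalgebra s b M \<longrightarrow> ideal (M \<inter> completion_of M)"
    then show "lie_solvable s b"
      using maximal_completion.completion maximal_completion_of
      by (intro solvable_if_Int_completion_ideal) blast
  qed
  then show ?thesis
    using ideal_index_eq_codim_iff by auto
qed

end
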